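(* Let $L$ be a sublattice of $A_n$ of rank $n$. For every $p\in L$, the Voronoi cell $V_\triangle(p)$ equals $\mathrm{pr}_0\big(\{x\in\mathbb R^{n+1}:x\le p\}\cap\partial\Sigma^c(L)\big)$. Consequently the Voronoi diagram of $L$ under $d_\triangle$ is the projection of $\partial\Sigma^c(L)$ onto $H_0$ along $(1,\dots,1)$.
   Context: Let $n\ge 1$, $H_0=\{x\in\mathbb R^{n+1}:\sum_i x_i=0\}$ and $A_n=H_0\cap\mathbb Z^{n+1}$. For $x\in\mathbb R^{n+1}$, $\deg(x)=\sum_i x_i$, and $\mathrm{pr}_0(x)=x-\frac{\deg(x)}{n+1}(1,\dots,1)$. Write $x\le y$ iff $x_i\le y_i$ for all $i$. Let $\Sigma^{\mathbb R}(L)=\{x\in\mathbb R^{n+1}: x\not\le q\text{ for all }q\in L\}$ and let $\Sigma^c(L)$ be its topological closure in $\mathbb R^{n+1}$. For $p,q\in H_0$ let $d_\triangle(p,q)=\max_i(p_i-q_i)$. For $p\in L$, the Voronoi cell is $V_\triangle(p)=\{x\in H_0: d_\triangle(x,p)\le d_\triangle(x,p')\ \forall p'\in L\}$. *)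

theory Defs
  imports "HOL-Analysis.Analysis"
begin

text \<open>Ambient space R^(n+1) is real^'n with CARD('n) = n+1.\<close>

definition vleq :: "real^'n \<Rightarrow> real^'n \<Rightarrow> bool" where
  "vleq x y \<longleftrightarrow> (\<forall>i. x$i \<le> y$i)"

definition deg :: "real^'n \<Rightarrow> real" where
  "deg x = (\<Sum>i\<in>UNIV. x$i)"

definition H0 :: "(real^'n) set" where
  "H0 = {x. deg x = 0}"

definition A_lat :: "(real^'n) set" where
  "A_lat = {x \<in> H0. \<forall>i. x$i \<in> \<int>}"

definition pr0 :: "real^'n \<Rightarrow> real^'n" where
  "pr0 x = x - (deg x / real CARD('n)) *\<^sub>R (\<chi> i. 1)"

definition SigmaR :: "(real^'n) set \<Rightarrow> (real^'n) set" where
  "SigmaR L = {x. \<forall>q\<in>L. \<not> vleq x q}"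

definition SigmaC :: "(real^'n) set \<Rightarrow> (real^'n) set" where
  "SigmaC L = closure (SigmaR L)"

definition d_tri :: "real^'n \<Rightarrow> real^'n \<Rightarrow> real" where
  "d_tri p q = Max (range (\<lambda>i. p$i - q$i))"

definition voronoi :: "(real^'n) set \<Rightarrow> real^'n \<Rightarrow> (real^'n) set" where
  "voronoi L p = {x \<in> H0. \<forall>p'\<in>L. d_tri x p \<le> d_tri x p'}"

text \<open>Sublattice of A_n: additive subgroup contained in A_n; rank = dimension of its span.\<close>
definition sublattice_An :: "(real^'n) set \<Rightarrow> bool" where
  "sublattice_An L \<longleftrightarrow> L \<subseteq> A_lat \<and> 0 \<in> L \<and>
     (\<forall>x\<in>L. \<forall>y\<in>L. x + y \<in> L) \<and> (\<forall>x\<in>L. - x \<in> L)"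

end

theory Submission
  imports Defs
begin

(* Write 1 for the all-ones vector and x < q for strict
   componentwise inequality.  Shifting x along 1 changes d_tri x p by the
   same amount for every p, so x \<in> H0 lies in the Voronoi cell of p exactly
   when y = x - d_tri x p *\<^sub>R 1 satisfies y \<le> p but y < q for no q \<in> L.
   The second condition describes the closure SigmaC L, for any set L:
   the strict lower orthant of q is open and misses SigmaR L, and conversely
   y + t *\<^sub>R 1 \<in> SigmaR L for all t > 0 once y is below no q strictly. *)

definition vless :: "real^'n \<Rightarrow> real^'n \<Rightarrow> bool" where
  "vless x y \<longleftrightarrow> (\<forall>i. x$i < y$i)"

abbreviation ones :: "real^'n" where
  "ones \<equiv> \<chi> i. 1"

lemma d_tri_le_iff: "d_tri x p \<le> t \<longleftrightarrow> (\<forall>i. x$i - p$i \<le> t)"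
  unfolding d_tri_def by (subst Max_le_iff) auto

lemma d_tri_less_iff: "d_tri x p < t \<longleftrightarrow> (\<forall>i. x$i - p$i < t)"
  unfolding d_tri_def by (subst Max_less_iff) auto

lemma vleq_iff_d_tri: "vleq x p \<longleftrightarrow> d_tri x p \<le> 0"
  by (simp add: vleq_def d_tri_le_iff)

lemma vless_iff_d_tri: "vless x p \<longleftrightarrow> d_tri x p < 0"
  by (simp add: vless_def d_tri_less_iff)

lemma d_tri_shift: "d_tri (x - c *\<^sub>R ones) p = d_tri x p - c"
proof -
  have "d_tri (x - c *\<^sub>R ones) p = Max ((\<lambda>i. (x$i - p$i) + (- c)) ` UNIV)"
    unfolding d_tri_def by (simp add: algebra_simps)
  also have "\<dots> = d_tri x p - c"
    unfolding d_tri_def by (subst Max_add_commute) auto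
  finally show ?thesis .
qed

lemma deg_shift: "deg (x - c *\<^sub>R ones) = deg (x::real^'n) - c * real CARD('n)"
  unfolding deg_def by (simp add: sum_subtractf)

lemma pr0_shift_in_H0:
  assumes "x \<in> H0"
  shows "pr0 (x - c *\<^sub>R ones) = x"
  using assms by (simp add: pr0_def deg_shift H0_def)

lemma pr0_in_H0: "pr0 x \<in> H0"
  by (simp add: H0_def pr0_def deg_shift)

lemma closure_of_ray:
  fixes y v :: "'a::real_normed_vector"
  assumes "\<And>t. t > 0 \<Longrightarrow> y + t *\<^sub>R v \<in> S"
  shows "y \<in> closure S"
proof -
  let ?x = "\<lambda>n. y + inverse (real (Suc n)) *\<^sub>R v"
  have "?x \<longlonglongrightarrow> y + 0 *\<^sub>R v"
    by (intro tendsto_intros LIMSEQ_inverse_real_of_nat)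
  moreover have "\<forall>n. ?x n \<in> S"
    using assms by simp
  ultimately show ?thesis
    unfolding closure_sequential by auto
qed

lemma open_vless_below: "open {z::real^'n. vless z q}"
proof -
  have "{z::real^'n. vless z q} = (\<Inter>i. {z. z$i < q$i})"
    by (auto simp: vless_def)
  then show ?thesis
    by (simp add: open_INT open_Collect_less continuous_on_component)
qed

lemma SigmaC_eq: "SigmaC L = {y. \<forall>q\<in>L. \<not> vless y q}"
proof (intro equalityI subsetI CollectI ballI notI)
  fix y q
  assume y: "y \<in> SigmaC L" and q: "q \<in> L" "vless y q"
  have "{z. vless z q} \<inter> SigmaR L = {}"
    using q(1) by (auto simp: SigmaR_def vless_def vleq_def less_imp_le)
  then have "{z. vless z q} \<inter> SigmaC L = {}"
    unfolding SigmaC_def using open_Int_closure_eq_empty[OF open_vless_below] by blast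
  with y q(2) show False by blast
next
  fix y
  assume y: "y \<in> {y. \<forall>q\<in>L. \<not> vless y q}"
  have "y + t *\<^sub>R ones \<in> SigmaR L" if "t > 0" for t
    unfolding SigmaR_def
  proof (intro CollectI ballI notI)
    fix q
    assume q: "q \<in> L" "vleq (y + t *\<^sub>R ones) q"
    have "vless y q"
      unfolding vless_def
    proof
      fix i
      have "y$i + t \<le> q$i"
        using q(2) by (simp add: vleq_def)
      with that show "y$i < q$i"
        by simp
    qed
    with y q(1) show False
      by blast
  qed
  then show "y \<in> SigmaC L"
    unfolding SigmaC_def by (rule closure_of_ray)
qed

lemma below_not_interior:
  assumes "p \<in> L" and "vleq y p"
  shows "y \<notin> interior (SigmaC L)"
proof -
  have "y + t *\<^sub>R (- ones) \<in> - SigmaC L" if "t > 0" for t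
  proof -
    have "vless (y + t *\<^sub>R (- ones)) p"
      unfolding vless_def
    proof
      fix i
      have "y$i \<le> p$i"
        using assms(2) by (simp add: vleq_def)
      with that show "(y + t *\<^sub>R (- ones))$i < p$i"
        by simp
    qed
    with assms(1) show ?thesis by (auto simp: SigmaC_eq)
  qed
  then have "y \<in> closure (- SigmaC L)"
    by (rule closure_of_ray)
  then show ?thesis
    by (simp add: closure_complement)
qed

lemma frontier_below_iff:
  assumes "p \<in> L" and "vleq y p"
  shows "y \<in> frontier (SigmaC L) \<longleftrightarrow> y \<in> SigmaC L"
  using below_not_interior[OF assms] unfolding frontier_def SigmaC_def by simp

lemma voronoi_eq_pr0_SigmaC:
  fixes L :: "(real^'n) set"
  assumes p: "p \<in> L"
  shows "voronoi L p = pr0 ` ({y. vleq y p} \<inter> SigmaC L)"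
proof (intro equalityI subsetI)
  fix x
  assume x: "x \<in> voronoi L p"
  then have xH: "x \<in> H0" and closest: "\<forall>q\<in>L. d_tri x p \<le> d_tri x q"
    by (auto simp: voronoi_def)
  define y where "y = x - d_tri x p *\<^sub>R ones"
  have "vleq y p"
    by (simp add: y_def vleq_iff_d_tri d_tri_shift)
  moreover have "y \<in> SigmaC L"
    using closest by (auto simp: SigmaC_eq vless_iff_d_tri y_def d_tri_shift)
  moreover have "pr0 y = x"
    unfolding y_def by (rule pr0_shift_in_H0[OF xH])
  ultimately show "x \<in> pr0 ` ({y. vleq y p} \<inter> SigmaC L)"
    by blast
next
  fix x
  assume "x \<in> pr0 ` ({y. vleq y p} \<inter> SigmaC L)"
  then obtain y where yp: "vleq y p" and yC: "y \<in> SigmaC L" and xy: "x = pr0 y"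
    by blast
  define c where "c = deg y / real CARD('n)"
  have x_eq: "x = y - c *\<^sub>R ones"
    by (simp add: xy pr0_def c_def)
  have "d_tri x p \<le> d_tri x q" if "q \<in> L" for q
  proof -
    have "d_tri y p \<le> 0"
      using yp by (simp add: vleq_iff_d_tri)
    moreover have "\<not> d_tri y q < 0"
      using yC that by (auto simp: SigmaC_eq vless_iff_d_tri)
    ultimately show ?thesis
      by (simp add: x_eq d_tri_shift)
  qed
  then show "x \<in> voronoi L p"
    using pr0_in_H0[of y] by (simp add: voronoi_def xy)
qed

lemma finite_vec_coordinatewise:
  assumes "\<And>i. finite (S i)"
  shows "finite {q::'a^'n. \<forall>i. q$i \<in> S i}"
proof (rule finite_subset)
  show "{q::'a^'n. \<forall>i. q$i \<in> S i} \<subseteq> vec_lambda ` (\<Pi>\<^sub>E i\<in>UNIV. S i)"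
    by (auto intro!: image_eqI[where x = "vec_nth _"])
  show "finite (vec_lambda ` (\<Pi>\<^sub>E i\<in>UNIV. S i))"
    using assms by (intro finite_imageI finite_PiE) auto
qed

(* Only finitely many points of A_n lie above a given point a: each
   coordinate of such q is an integer between a_i and a_i - deg a. *)
lemma finite_A_lat_above: "finite {q \<in> A_lat. vleq (a::real^'n) q}"
proof (rule finite_subset)
  show "{q \<in> A_lat. vleq a q} \<subseteq> {q. \<forall>i. q$i \<in> {x \<in> \<int>. a$i \<le> x \<and> x \<le> a$i - deg a}}"
  proof (rule subsetI, rule CollectI, rule allI)
    fix q i
    assume "q \<in> {q \<in> A_lat. vleq a q}"
    then have qZ: "q$i \<in> \<int>" and dq: "deg q = 0" and aq: "\<forall>j. a$j \<le> q$j"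
      by (auto simp: A_lat_def H0_def vleq_def)
    have "q$i - a$i \<le> (\<Sum>j\<in>UNIV. q$j - a$j)"
      using aq by (intro member_le_sum) auto
    also have "\<dots> = - deg a"
      using dq by (simp add: deg_def sum_subtractf)
    finally show "q$i \<in> {x \<in> \<int>. a$i \<le> x \<and> x \<le> a$i - deg a}"
      using qZ aq by simp
  qed
  show "finite {q::real^'n. \<forall>i. q$i \<in> {x \<in> \<int>. a$i \<le> x \<and> x \<le> a$i - deg a}}"
    by (intro finite_vec_coordinatewise finite_int_segment)
qed

lemma open_not_vleq: "open {z::real^'n. \<not> vleq z q}"
  unfolding vleq_def
  by (intro open_Collect_neg closed_Collect_all closed_Collect_le continuous_intros)

(* For L \<subseteq> A_n the set SigmaR L is open: near y only the finitely many
   q \<in> L above y - 1 can dominate a point. *)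
lemma open_SigmaR:
  assumes "L \<subseteq> A_lat"
  shows "open (SigmaR L)"
proof (rule open_subopen[THEN iffD2], intro ballI)
  fix y
  assume y: "y \<in> SigmaR L"
  define Q where "Q = {q \<in> L. vleq (y - ones) q}"
  define T where "T = ball y 1 \<inter> (\<Inter>q\<in>Q. {z. \<not> vleq z q})"
  have "Q \<subseteq> {q \<in> A_lat. vleq (y - ones) q}"
    using assms by (auto simp: Q_def)
  then have "finite Q"
    using finite_A_lat_above finite_subset by blast
  then have "open T"
    unfolding T_def by (intro open_Int open_ball open_INT ballI open_not_vleq)
  moreover have "y \<in> T"
    using y by (auto simp: T_def Q_def SigmaR_def)
  moreover have "T \<subseteq> SigmaR L"
  proof (intro subsetI, unfold SigmaR_def, intro CollectI ballI notI)
    fix z q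
    assume z: "z \<in> T" and q: "q \<in> L" "vleq z q"
    have "y$i - 1 \<le> q$i" for i
    proof -
      have "\<bar>(y - z)$i\<bar> < 1"
        using component_le_norm_cart[of "y - z" i] z by (simp add: T_def dist_norm)
      moreover have "z$i \<le> q$i"
        using q(2) by (simp add: vleq_def)
      ultimately show ?thesis
        by (simp add: abs_less_iff)
    qed
    with q have "q \<in> Q"
      by (simp add: Q_def vleq_def)
    with z q(2) show False
      by (auto simp: T_def)
  qed
  ultimately show "\<exists>T. open T \<and> y \<in> T \<and> T \<subseteq> SigmaR L"
    by blast
qed

lemma frontier_below_some:
  assumes "L \<subseteq> A_lat" and "y \<in> frontier (SigmaC L)"
  shows "\<exists>q\<in>L. vleq y q"
proof -
  have "SigmaR L \<subseteq> interior (SigmaC L)"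
    unfolding SigmaC_def by (rule interior_maximal[OF closure_subset open_SigmaR[OF assms(1)]])
  with assms(2) have "y \<notin> SigmaR L"
    by (auto simp: frontier_def)
  then show ?thesis
    by (simp add: SigmaR_def)
qed

theorem mainTheorem11:
  fixes L :: "(real^'n) set"
  assumes "CARD('n) \<ge> 2"
    and "sublattice_An L"
    and "dim L = CARD('n) - 1"
  shows "(\<forall>p\<in>L. voronoi L p = pr0 ` ({x. vleq x p} \<inter> frontier (SigmaC L)))
         \<and> (\<Union>p\<in>L. voronoi L p) = pr0 ` frontier (SigmaC L)"
proof -
  have LA: "L \<subseteq> A_lat"
    using assms(2) by (simp add: sublattice_An_def)
  have cell: "voronoi L p = pr0 ` ({x. vleq x p} \<inter> frontier (SigmaC L))" if "p \<in> L" for p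
  proof -
    have "{x. vleq x p} \<inter> frontier (SigmaC L) = {x. vleq x p} \<inter> SigmaC L"
      using frontier_below_iff[OF that] by blast
    then show ?thesis
      using voronoi_eq_pr0_SigmaC[OF that] by simp
  qed
  have "(\<Union>p\<in>L. {x. vleq x p} \<inter> frontier (SigmaC L)) = frontier (SigmaC L)"
    using frontier_below_some[OF LA] by blast
  then have "(\<Union>p\<in>L. voronoi L p) = pr0 ` frontier (SigmaC L)"
    using cell by (simp add: image_UN[symmetric])
  with cell show ?thesis
    by blast
qed

end
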